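(* Let $$E=\begin{bmatrix} J_{k,a} & -J_{k,b} & J_{k,c} & -J_{k,d} & 0 & 0 \\ -J_{l,a} & J_{l,b} & -J_{l,c} & J_{l,d} & 0 & 0 \\ J_{p,a} & -J_{p,b} & 0 & 0 & J_{p,e} & -J_{p,f} \\ -J_{q,a} & J_{q,b} & 0 & 0 & -J_{q,e} & J_{q,f} \\ 0 & 0 & J_{r,c} & -J_{r,d} & -J_{r,e} & J_{r,f} \\ 0 & 0 & -J_{s,c} & J_{s,d} & J_{s,e} & -J_{s,f} \\ \end{bmatrix}$$ where $E\mathbf{1}=0$, $\mathbf{1}^TE=0^T$, and $a+b$, $c+d$, $e+f$, $k+l$, $p+q$ and $r+s$ are positive. Let \begin{align*} A=\begin{bmatrix} 0 & J_{k,b} & 0 & J_{k,d} & X_{11} & X_{12} \\ J_{l,a} & 0 & J_{l,c} & 0 & X_{21} & X_{22} \\ 0 & J_{p,b} & Y_{11} & Y_{12} & 0 & J_{p,f} \\ J_{q,a} & 0 & Y_{21} & Y_{22} & J_{q,e} & 0 \\ Z_{11} & Z_{12} & 0 & J_{r,d} & J_{r,e} & 0 \\ Z_{21} & Z_{22} & J_{s,c} & 0 & 0 & J_{s,f} \\ \end{bmatrix} \end{align*} be a $(0,1)$ matrix conformally partitioned with $E$. Suppose that $X=\begin{bmatrix} X_{11} & X_{12}\\ X_{21} & X_{22} \end{bmatrix}$, $Y=\begin{bmatrix} Y_{11} & Y_{12}\\ Y_{21} & Y_{22} \end{bmatrix}$ and $Z=\begin{bmatrix} Z_{11} & Z_{12}\\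 Z_{21} & Z_{22} \end{bmatrix}$. Then, $A$ and $A+E$ are Gram mates if and only if $X$, $Y$ and $Z$ satisfy the following conditions: \begin{enumerate} \item there are integers $x_1,x_2,y_1,y_2,z_1$ and $z_2$ such that $X\begin{bmatrix} \mathbf{1}\\ -\mathbf{1} \end{bmatrix}=\begin{bmatrix} x_1\mathbf{1}\\ x_2\mathbf{1} \end{bmatrix}$, $Y\begin{bmatrix} \mathbf{1}\\ -\mathbf{1} \end{bmatrix}=\begin{bmatrix} y_1\mathbf{1}\\ y_2\mathbf{1} \end{bmatrix}$, $Z\begin{bmatrix} \mathbf{1}\\ -\mathbf{1} \end{bmatrix}=\begin{bmatrix} z_1\mathbf{1}\\ z_2\mathbf{1} \end{bmatrix}$ and $x_1=y_2=-z_2$, $x_2=y_1=-z_1$, $x_1+x_2=y_1+y_2=-(z_1+z_2)=e-f$; and \item there are integers $\alpha_1,\alpha_2,\beta_1,\beta_2,\gamma_1$ and $\gamma_2$ such that $X^T\begin{bmatrix} \mathbf{1}\\ -\mathbf{1} \end{bmatrix}=\begin{bmatrix} \alpha_1\mathbf{1}\\ \alpha_2\mathbf{1} \end{bmatrix}$, $Y^T\begin{bmatrix} \mathbf{1}\\ -\mathbf{1} \end{bmatrix}=\begin{bmatrix} \beta_1\mathbf{1}\\ \beta_2\mathbf{1} \end{bmatrix}$, $Z^T\begin{bmatrix} \mathbf{1}\\ -\mathbf{1} \end{bmatrix}=\begin{bmatrix} \gamma_1\mathbf{1}\\ \gamma_2\mathbf{1} \end{bmatrix}$ and $\gamma_1=\beta_2=-\alpha_2$,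 $\gamma_2=\beta_1=-\alpha_1$, $\gamma_1+\gamma_2=\beta_1+\beta_2=-(\alpha_1+\alpha_2)=l-k$. \end{enumerate} In particular, conditions 1 and 2 imply $e\alpha_1-f\alpha_2=kx_1-lx_2$, $c\beta_1-d\beta_2=py_1-qy_2$, and $a\gamma_1-b\gamma_2=rz_1-sz_2$.
   Context: $J_{p,q}$ denotes the $p\times q$ all-ones matrix (absent if $p=0$ or $q=0$) and $\mathbf{1}$ an all-ones column vector of appropriate size. Two $(0,1)$ matrices $A\neq B$ are Gram mates if $AA^T=BB^T$ and $A^TA=B^TB$. *)

theory Defs
  imports "Jordan_Normal_Form.Matrix"
begin

definition J :: "nat \<Rightarrow> nat \<Rightarrow> int mat" where
  "J m n = mat m n (\<lambda>_. 1)"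

definition ones :: "nat \<Rightarrow> int vec" where
  "ones n = vec n (\<lambda>_. 1)"

text \<open>Locate index i in a list of consecutive block sizes: (block number, offset).\<close>
fun blk :: "nat list \<Rightarrow> nat \<Rightarrow> nat \<times> nat" where
  "blk [] i = (0, i)"
| "blk (n # ns) i = (if i < n then (0, i) else (let (bi, oi) = blk ns (i - n) in (Suc bi, oi)))"

definition block_mat :: "nat list \<Rightarrow> nat list \<Rightarrow> int mat list list \<Rightarrow> int mat" where
  "block_mat rs cs Bs = mat (sum_list rs) (sum_list cs)
     (\<lambda>(i, j). case blk rs i of (I, oi) \<Rightarrow> case blk cs j of (K, oj) \<Rightarrow> (Bs ! I ! K) $$ (oi, oj))"

definition zero_one_mat :: "int mat \<Rightarrow> bool" where
  "zero_one_mat M \<longleftrightarrow> (\<forall>i < dim_row M. \<forall>j < dim_col M. M $$ (i, j) \<in> {0, 1})"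

definition gram_mates :: "int mat \<Rightarrow> int mat \<Rightarrow> bool" where
  "gram_mates A B \<longleftrightarrow> zero_one_mat A \<and> zero_one_mat B \<and> A \<noteq> B \<and>
     A * A\<^sup>T = B * B\<^sup>T \<and> A\<^sup>T * A = B\<^sup>T * B"

definition pm_vec :: "nat \<Rightarrow> nat \<Rightarrow> int vec" where
  "pm_vec u v = vec (u + v) (\<lambda>j. if j < u then 1 else -1)"

definition two_vec :: "nat \<Rightarrow> nat \<Rightarrow> int \<Rightarrow> int \<Rightarrow> int vec" where
  "two_vec u v x y = vec (u + v) (\<lambda>i. if i < u then x else y)"

end

theory Submission
  imports Defs
begin

text \<open>
  Write E blockwise as \<open>\<epsilon>\<^sub>I\<^sub>K J\<close> for a sign pattern \<open>\<epsilon>\<close>. For rows i, j of A in row blocks I, L,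
  the (i, j) entry of \<open>(A + E)(A + E)\<^sup>T - A A\<^sup>T\<close> is
  \<open>\<Sum>\<^sub>K \<epsilon>\<^sub>L\<^sub>K \<rho>\<^sub>I\<^sub>K(i) + \<epsilon>\<^sub>I\<^sub>K \<rho>\<^sub>L\<^sub>K(j) + \<epsilon>\<^sub>I\<^sub>K \<epsilon>\<^sub>L\<^sub>K c\<^sub>K\<close>, where \<open>\<rho>\<^sub>I\<^sub>K(i)\<close> is the i-th row sum of block
  (I, K) of A and \<open>c\<^sub>K\<close> the width of column block K. Since \<open>E \<one> = 0\<close> forces
  \<open>a - b = d - c = f - e\<close>, this vanishes when I and L lie in the same pair {k, l}, {p, q} or
  {r, s} of row blocks; otherwise it vanishes iff \<open>\<tau>(i) = \<tau>(j)\<close> for a row invariant \<open>\<tau>\<close> read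
  off from X, Y, Z. As the first two pairs are nonempty, the row Gram matrices agree iff \<open>\<tau>\<close> is
  constant, which unpacks to condition 1. The matrix \<open>A\<^sup>T\<close> has the same shape with
  \<open>Z\<^sup>T, Y\<^sup>T, X\<^sup>T\<close> in the roles of X, Y, Z, so the column Gram matrices agree iff condition 2
  holds. Finally \<open>(X\<^sup>T u) \<bullet> v = u \<bullet> (X v)\<close> for the \<open>\<plusminus>1\<close> vectors u, v gives
  \<open>e \<alpha>\<^sub>1 - f \<alpha>\<^sub>2 = k x\<^sub>1 - l x\<^sub>2\<close>, and likewise for Y and Z.
\<close>

section \<open>Block matrices\<close>

lemma sum_list_take_add_nth_le:
  "I < length ns \<Longrightarrow> sum_list (take I ns) + ns ! I \<le> sum_list (ns :: nat list)"
  by (induction ns arbitrary: I) (auto simp: nth_Cons split: nat.splits)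

lemma blkD:
  "i < sum_list (ns :: nat list) \<Longrightarrow> blk ns i = (I, j) \<Longrightarrow>
    I < length ns \<and> j < ns ! I \<and> i = sum_list (take I ns) + j"
proof (induction ns arbitrary: i I j)
  case Nil
  then show ?case by simp
next
  case (Cons n ns)
  show ?case
  proof (cases "i < n")
    case True
    then show ?thesis using Cons.prems by auto
  next
    case False
    obtain I' j' where blk': "blk ns (i - n) = (I', j')" by fastforce
    with Cons.prems False have "I = Suc I'" "j = j'" by auto
    moreover have "I' < length ns \<and> j' < ns ! I' \<and> i - n = sum_list (take I' ns) + j'"
      using Cons.IH[OF _ blk'] Cons.prems False by auto
    ultimately show ?thesis using False by auto
  qed
qed

lemma blk_sum_list_take: "I < length ns \<Longrightarrow> j < ns ! I \<Longrightarrow> blk ns (sum_list (take I ns) + j) = (I, j)"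
proof (induction ns arbitrary: I)
  case Nil
  then show ?case by simp
next
  case (Cons n ns)
  then show ?case by (cases I) auto
qed

lemma block_index_cases:
  assumes "i < sum_list (ns :: nat list)"
  obtains I j where "I < length ns" "j < ns ! I" "i = sum_list (take I ns) + j"
  using blkD[OF assms] by (metis surj_pair)

lemma sum_lessThan_add: "(\<Sum>i < n + (m :: nat). h i) = (\<Sum>i < n. h i) + (\<Sum>i < m. h (n + i))"
  by (induction m) (auto simp: add.assoc)

lemma sum_lessThan_sum_list:
  "(\<Sum>i < sum_list (ns :: nat list). h i) = (\<Sum>K < length ns. \<Sum>j < ns ! K. h (sum_list (take K ns) + j))"
proof (induction ns arbitrary: h)
  case Nil
  then show ?case by simp
next
  case (Cons n ns)
  then show ?case
    by (simp add: sum_lessThan_add sum.lessThan_Suc_shift add.assoc del: sum.lessThan_Suc)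
qed

lemma dim_block_mat [simp]:
  "dim_row (block_mat rs cs Bs) = sum_list rs" "dim_col (block_mat rs cs Bs) = sum_list cs"
  by (simp_all add: block_mat_def)

lemma block_mat_carrier_mat: "block_mat rs cs Bs \<in> carrier_mat (sum_list rs) (sum_list cs)"
  by (rule carrier_matI) simp_all

lemma index_block_mat:
  assumes "I < length rs" "i < rs ! I" "K < length cs" "j < cs ! K"
  shows "block_mat rs cs Bs $$ (sum_list (take I rs) + i, sum_list (take K cs) + j) = Bs ! I ! K $$ (i, j)"
proof -
  have "sum_list (take I rs) + i < sum_list rs" "sum_list (take K cs) + j < sum_list cs"
    using sum_list_take_add_nth_le[of I rs] sum_list_take_add_nth_le[of K cs] assms by linarith+
  then show ?thesis using assms by (simp add: block_mat_def blk_sum_list_take)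
qed

lemma transpose_block_mat:
  assumes "\<And>I K i j. I < length rs \<Longrightarrow> K < length cs \<Longrightarrow> i < rs ! I \<Longrightarrow> j < cs ! K \<Longrightarrow>
      Bs' ! K ! I $$ (j, i) = Bs ! I ! K $$ (i, j)"
  shows "(block_mat rs cs Bs)\<^sup>T = block_mat cs rs Bs'"
proof (rule eq_matI)
  fix i j assume "i < dim_row (block_mat cs rs Bs')" "j < dim_col (block_mat cs rs Bs')"
  then obtain K i' I j' where "K < length cs" "i' < cs ! K" "i = sum_list (take K cs) + i'"
    and "I < length rs" "j' < rs ! I" "j = sum_list (take I rs) + j'"
    by (auto elim!: block_index_cases)
  moreover from this have "i < sum_list cs" "j < sum_list rs"
    using sum_list_take_add_nth_le[of K cs] sum_list_take_add_nth_le[of I rs] by linarith+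
  ultimately show "(block_mat rs cs Bs)\<^sup>T $$ (i, j) = block_mat cs rs Bs' $$ (i, j)"
    using assms by (simp add: index_block_mat)
qed simp_all

section \<open>Gram matrices of blockwise constant perturbations\<close>

definition block_row_sum :: "nat list \<Rightarrow> int mat list list \<Rightarrow> nat \<Rightarrow> nat \<Rightarrow> nat \<Rightarrow> int" where
  "block_row_sum cs Bs I i K = (\<Sum>j < cs ! K. Bs ! I ! K $$ (i, j))"

lemma index_mult_transpose_self:
  "i < dim_row M \<Longrightarrow> j < dim_row M \<Longrightarrow> (M * M\<^sup>T) $$ (i, j) = (\<Sum>c < dim_col M. M $$ (i, c) * M $$ (j, c))"
  by (simp add: scalar_prod_def atLeast0LessThan)

lemma gram_add_blockwise_constant:
  fixes Bs Es :: "int mat list list"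
  assumes I: "I < length rs" "i < rs ! I" and L: "L < length rs" "j < rs ! L"
    and const: "\<And>I K i j. I < length rs \<Longrightarrow> K < length cs \<Longrightarrow> i < rs ! I \<Longrightarrow> j < cs ! K \<Longrightarrow>
      Es ! I ! K $$ (i, j) = \<epsilon> I K"
  defines "M \<equiv> block_mat rs cs Bs" and "N \<equiv> block_mat rs cs Es"
    and "i' \<equiv> sum_list (take I rs) + i" and "j' \<equiv> sum_list (take L rs) + j"
  shows "((M + N) * (M + N)\<^sup>T) $$ (i', j') = (M * M\<^sup>T) $$ (i', j') +
    (\<Sum>K < length cs. \<epsilon> L K * block_row_sum cs Bs I i K + \<epsilon> I K * block_row_sum cs Bs L j K
       + \<epsilon> I K * \<epsilon> L K * int (cs ! K))"
proof -
  have i': "i' < sum_list rs" and j': "j' < sum_list rs"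
    using sum_list_take_add_nth_le[OF I(1)] sum_list_take_add_nth_le[OF L(1)] I L
    unfolding i'_def j'_def by linarith+
  have "((M + N) * (M + N)\<^sup>T) $$ (i', j') =
      (\<Sum>c < sum_list cs. (M $$ (i', c) + N $$ (i', c)) * (M $$ (j', c) + N $$ (j', c)))"
    using i' j' by (subst index_mult_transpose_self) (simp_all add: M_def N_def)
  moreover have "(M * M\<^sup>T) $$ (i', j') = (\<Sum>c < sum_list cs. M $$ (i', c) * M $$ (j', c))"
    using i' j' by (subst index_mult_transpose_self) (simp_all add: M_def)
  ultimately have "((M + N) * (M + N)\<^sup>T) $$ (i', j') - (M * M\<^sup>T) $$ (i', j') =
      (\<Sum>c < sum_list cs. M $$ (i', c) * N $$ (j', c) + N $$ (i', c) * M $$ (j', c) + N $$ (i', c) * N $$ (j', c))"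
    by (simp add: sum_subtractf[symmetric] algebra_simps)
  also have "\<dots> = (\<Sum>K < length cs. \<Sum>w < cs ! K.
      \<epsilon> L K * Bs ! I ! K $$ (i, w) + \<epsilon> I K * Bs ! L ! K $$ (j, w) + \<epsilon> I K * \<epsilon> L K)"
    unfolding sum_lessThan_sum_list using I L
    by (intro sum.cong refl) (simp add: M_def N_def i'_def j'_def index_block_mat const)
  also have "\<dots> = (\<Sum>K < length cs. \<epsilon> L K * block_row_sum cs Bs I i K + \<epsilon> I K * block_row_sum cs Bs L j K
       + \<epsilon> I K * \<epsilon> L K * int (cs ! K))"
    by (simp add: block_row_sum_def sum.distrib sum_distrib_left mult.commute)
  finally show ?thesis by simp
qed

lemma mult_ones_blockwise_constant:
  assumes "I < length rs" "i < rs ! I"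
    and const: "\<And>I K i j. I < length rs \<Longrightarrow> K < length cs \<Longrightarrow> i < rs ! I \<Longrightarrow> j < cs ! K \<Longrightarrow>
      Es ! I ! K $$ (i, j) = \<epsilon> I K"
  shows "(block_mat rs cs Es *\<^sub>v ones (sum_list cs)) $ (sum_list (take I rs) + i) =
    (\<Sum>K < length cs. \<epsilon> I K * int (cs ! K))"
proof -
  have "sum_list (take I rs) + i < sum_list rs"
    using sum_list_take_add_nth_le[of I rs] assms(1,2) by linarith
  then have "(block_mat rs cs Es *\<^sub>v ones (sum_list cs)) $ (sum_list (take I rs) + i) =
      (\<Sum>c < sum_list cs. block_mat rs cs Es $$ (sum_list (take I rs) + i, c))"
    by (simp add: scalar_prod_def atLeast0LessThan ones_def)
  also have "\<dots> = (\<Sum>K < length cs. \<epsilon> I K * int (cs ! K))"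
    unfolding sum_lessThan_sum_list using assms by (intro sum.cong) (simp_all add: index_block_mat)
  finally show ?thesis .
qed

lemma zero_one_mat_add:
  assumes "zero_one_mat M" "N \<in> carrier_mat (dim_row M) (dim_col M)"
    and "\<And>i j. i < dim_row M \<Longrightarrow> j < dim_col M \<Longrightarrow>
      (N $$ (i, j) = 0) \<or> (N $$ (i, j) = 1 \<and> M $$ (i, j) = 0) \<or> (N $$ (i, j) = -1 \<and> M $$ (i, j) = 1)"
  shows "zero_one_mat (M + N)"
  using assms unfolding zero_one_mat_def by fastforce

section \<open>Products with \<open>\<plusminus>1\<close> vectors\<close>

definition row_sum :: "int mat \<Rightarrow> nat \<Rightarrow> int" where
  "row_sum M i = (\<Sum>j < dim_col M. M $$ (i, j))"

lemma all_less_add_iff: "(\<forall>i < k + (l :: nat). P i) \<longleftrightarrow> (\<forall>i < k. P i) \<and> (\<forall>i < l. P (k + i))"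
  by (metis add_diff_inverse_nat add_less_cancel_left trans_less_add1)

lemma four_block_mat_mult_pm_vec_eq_two_vec_iff:
  assumes "M11 \<in> carrier_mat k e" "M12 \<in> carrier_mat k f" "M21 \<in> carrier_mat l e" "M22 \<in> carrier_mat l f"
  shows "four_block_mat M11 M12 M21 M22 *\<^sub>v pm_vec e f = two_vec k l x1 x2 \<longleftrightarrow>
    (\<forall>i < k. row_sum M11 i - row_sum M12 i = x1) \<and> (\<forall>i < l. row_sum M21 i - row_sum M22 i = x2)"
proof -
  let ?M = "four_block_mat M11 M12 M21 M22"
  have entry: "(?M *\<^sub>v pm_vec e f) $ i =
      (if i < k then row_sum M11 i - row_sum M12 i else row_sum M21 (i - k) - row_sum M22 (i - k))"
    if "i < k + l" for i
  proof -
    have "(?M *\<^sub>v pm_vec e f) $ i = (\<Sum>j < e + f. ?M $$ (i, j) * pm_vec e f $ j)"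
      using that assms by (simp add: scalar_prod_def atLeast0LessThan pm_vec_def)
    also have "\<dots> = (\<Sum>j < e. ?M $$ (i, j)) - (\<Sum>j < f. ?M $$ (i, e + j))"
      by (simp add: sum_lessThan_add pm_vec_def sum_negf)
    finally show ?thesis
      using that assms by (simp add: four_block_mat_def row_sum_def)
  qed
  have "?M *\<^sub>v pm_vec e f = two_vec k l x1 x2 \<longleftrightarrow> (\<forall>i < k + l. (?M *\<^sub>v pm_vec e f) $ i = two_vec k l x1 x2 $ i)"
    using assms by (auto simp: vec_eq_iff two_vec_def)
  then show ?thesis
    by (simp add: all_less_add_iff entry two_vec_def)
qed

lemma scalar_prod_two_vec_pm_vec: "two_vec u v x y \<bullet> pm_vec u v = int u * x - int v * y"
  by (simp add: scalar_prod_def two_vec_def pm_vec_def atLeast0LessThan sum_lessThan_add sum_negf)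

lemma scalar_prod_pm_vec_two_vec: "pm_vec u v \<bullet> two_vec u v x y = int u * x - int v * y"
  by (simp add: scalar_prod_def two_vec_def pm_vec_def atLeast0LessThan sum_lessThan_add sum_negf)

lemma pm_vec_two_vec_transpose_identity:
  assumes "M \<in> carrier_mat (k + l) (e + f)"
    and "M *\<^sub>v pm_vec e f = two_vec k l x1 x2" and "M\<^sup>T *\<^sub>v pm_vec k l = two_vec e f \<alpha>1 \<alpha>2"
  shows "int e * \<alpha>1 - int f * \<alpha>2 = int k * x1 - int l * x2"
proof -
  have "(M\<^sup>T *\<^sub>v pm_vec k l) \<bullet> pm_vec e f = pm_vec k l \<bullet> (M *\<^sub>v pm_vec e f)"
    using assms(1) by (rule transpose_vec_mult_scalar) (simp_all add: pm_vec_def)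
  then show ?thesis
    using assms(2,3) by (simp add: scalar_prod_two_vec_pm_vec scalar_prod_pm_vec_two_vec)
qed

section \<open>The block pattern of the theorem\<close>

definition E_blocks :: "nat \<Rightarrow> nat \<Rightarrow> nat \<Rightarrow> nat \<Rightarrow> nat \<Rightarrow> nat \<Rightarrow>
    nat \<Rightarrow> nat \<Rightarrow> nat \<Rightarrow> nat \<Rightarrow> nat \<Rightarrow> nat \<Rightarrow> int mat list list" where
  "E_blocks k l p q r s a b c d e f =
      [[J k a, - J k b, J k c, - J k d, 0\<^sub>m k e, 0\<^sub>m k f],
       [- J l a, J l b, - J l c, J l d, 0\<^sub>m l e, 0\<^sub>m l f],
       [J p a, - J p b, 0\<^sub>m p c, 0\<^sub>m p d, J p e, - J p f],
       [- J q a, J q b, 0\<^sub>m q c, 0\<^sub>m q d, - J q e, J q f],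
       [0\<^sub>m r a, 0\<^sub>m r b, J r c, - J r d, - J r e, J r f],
       [0\<^sub>m s a, 0\<^sub>m s b, - J s c, J s d, J s e, - J s f]]"

definition A_blocks :: "nat \<Rightarrow> nat \<Rightarrow> nat \<Rightarrow> nat \<Rightarrow> nat \<Rightarrow> nat \<Rightarrow>
    nat \<Rightarrow> nat \<Rightarrow> nat \<Rightarrow> nat \<Rightarrow> nat \<Rightarrow> nat \<Rightarrow>
    int mat \<Rightarrow> int mat \<Rightarrow> int mat \<Rightarrow> int mat \<Rightarrow> int mat \<Rightarrow> int mat \<Rightarrow>
    int mat \<Rightarrow> int mat \<Rightarrow> int mat \<Rightarrow> int mat \<Rightarrow> int mat \<Rightarrow> int mat \<Rightarrow> int mat list list" where
  "A_blocks k l p q r s a b c d e f X11 X12 X21 X22 Y11 Y12 Y21 Y22 Z11 Z12 Z21 Z22 =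
      [[0\<^sub>m k a, J k b, 0\<^sub>m k c, J k d, X11, X12],
       [J l a, 0\<^sub>m l b, J l c, 0\<^sub>m l d, X21, X22],
       [0\<^sub>m p a, J p b, Y11, Y12, 0\<^sub>m p e, J p f],
       [J q a, 0\<^sub>m q b, Y21, Y22, J q e, 0\<^sub>m q f],
       [Z11, Z12, 0\<^sub>m r c, J r d, J r e, 0\<^sub>m r f],
       [Z21, Z22, J s c, 0\<^sub>m s d, 0\<^sub>m s e, J s f]]"

definition E_sign :: "nat \<Rightarrow> nat \<Rightarrow> int" where
  "E_sign I K = [[1, -1, 1, -1, 0, 0], [-1, 1, -1, 1, 0, 0], [1, -1, 0, 0, 1, -1],
     [-1, 1, 0, 0, -1, 1], [0, 0, 1, -1, -1, 1], [0, 0, -1, 1, 1, -1]] ! I ! K"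

lemma less_6_cases: "(I :: nat) < 6 \<Longrightarrow> I = 0 \<or> I = 1 \<or> I = 2 \<or> I = 3 \<or> I = 4 \<or> I = 5"
  by auto

lemma sum_lessThan_6: "(\<Sum>K < (6 :: nat). h K) = h 0 + h 1 + h 2 + h 3 + h 4 + (h 5 :: int)"
  by (simp add: eval_nat_numeral)

lemma all_less_6_iff: "(\<forall>I < 6. P I) \<longleftrightarrow> P 0 \<and> P 1 \<and> P 2 \<and> P 3 \<and> P 4 \<and> P (5 :: nat)"
  by (auto dest: less_6_cases)

lemma index_J [simp]: "i < m \<Longrightarrow> j < n \<Longrightarrow> J m n $$ (i, j) = 1"
  and dim_J [simp]: "dim_row (J m n) = m" "dim_col (J m n) = n"
  by (simp_all add: J_def)

lemma index_E_blocks: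
  "I < 6 \<Longrightarrow> K < 6 \<Longrightarrow> i < [k, l, p, q, r, s] ! I \<Longrightarrow> j < [a, b, c, d, e, f] ! K \<Longrightarrow>
    E_blocks k l p q r s a b c d e f ! I ! K $$ (i, j) = E_sign I K"
  using less_6_cases[of I] less_6_cases[of K] by (auto simp: E_blocks_def E_sign_def)

lemma transpose_E_blocks:
  "(block_mat [k, l, p, q, r, s] [a, b, c, d, e, f] (E_blocks k l p q r s a b c d e f))\<^sup>T =
    block_mat [a, b, c, d, e, f] [k, l, p, q, r, s] (E_blocks a b c d e f k l p q r s)"
  by (rule transpose_block_mat) (auto simp: E_blocks_def less_Suc_eq numeral_eq_Suc)

lemma transpose_A_blocks:
  assumes "X11 \<in> carrier_mat k e" "X12 \<in> carrier_mat k f" "X21 \<in> carrier_mat l e" "X22 \<in> carrier_mat l f"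
    "Y11 \<in> carrier_mat p c" "Y12 \<in> carrier_mat p d" "Y21 \<in> carrier_mat q c" "Y22 \<in> carrier_mat q d"
    "Z11 \<in> carrier_mat r a" "Z12 \<in> carrier_mat r b" "Z21 \<in> carrier_mat s a" "Z22 \<in> carrier_mat s b"
  shows "(block_mat [k, l, p, q, r, s] [a, b, c, d, e, f]
      (A_blocks k l p q r s a b c d e f X11 X12 X21 X22 Y11 Y12 Y21 Y22 Z11 Z12 Z21 Z22))\<^sup>T =
    block_mat [a, b, c, d, e, f] [k, l, p, q, r, s]
      (A_blocks a b c d e f k l p q r s (Z11\<^sup>T) (Z21\<^sup>T) (Z12\<^sup>T) (Z22\<^sup>T)
        (Y11\<^sup>T) (Y21\<^sup>T) (Y12\<^sup>T) (Y22\<^sup>T) (X11\<^sup>T) (X21\<^sup>T) (X12\<^sup>T) (X22\<^sup>T))"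
  by (rule transpose_block_mat) (use assms in \<open>auto simp: A_blocks_def less_Suc_eq numeral_eq_Suc\<close>)

lemma A_blocks_E_sign_cases:
  "I < 6 \<Longrightarrow> K < 6 \<Longrightarrow> i < [k, l, p, q, r, s] ! I \<Longrightarrow> j < [a, b, c, d, e, f] ! K \<Longrightarrow>
    E_sign I K = 0 \<or>
    E_sign I K = 1 \<and>
      A_blocks k l p q r s a b c d e f X11 X12 X21 X22 Y11 Y12 Y21 Y22 Z11 Z12 Z21 Z22 ! I ! K $$ (i, j) = 0 \<or>
    E_sign I K = -1 \<and>
      A_blocks k l p q r s a b c d e f X11 X12 X21 X22 Y11 Y12 Y21 Y22 Z11 Z12 Z21 Z22 ! I ! K $$ (i, j) = 1"
  by (auto simp: A_blocks_def E_sign_def dest!: less_6_cases)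

lemma E_mult_ones_eq_0D:
  assumes "block_mat [k, l, p, q, r, s] [a, b, c, d, e, f] (E_blocks k l p q r s a b c d e f)
      *\<^sub>v ones (a + b + c + d + e + f) = 0\<^sub>v (k + l + p + q + r + s)"
    and "k + l > 0" "p + q > 0"
  shows "int a - int b = int d - int c" "int a - int b = int f - int e"
proof -
  let ?rs = "[k, l, p, q, r, s]" and ?cs = "[a, b, c, d, e, f]"
  have E_ones: "block_mat ?rs ?cs (E_blocks k l p q r s a b c d e f) *\<^sub>v ones (sum_list ?cs) = 0\<^sub>v (sum_list ?rs)"
    using assms(1) by (simp add: add.assoc)
  have row: "(\<Sum>K < length ?cs. E_sign I K * int (?cs ! K)) = 0" if "I < 6" "0 < ?rs ! I" for I
  proof -
    have "sum_list (take I ?rs) + 0 < sum_list ?rs"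
      using sum_list_take_add_nth_le[of I ?rs] that by simp
    have "(\<Sum>K < length ?cs. E_sign I K * int (?cs ! K)) =
        (block_mat ?rs ?cs (E_blocks k l p q r s a b c d e f) *\<^sub>v ones (sum_list ?cs)) $ (sum_list (take I ?rs) + 0)"
      using that by (intro mult_ones_blockwise_constant[symmetric]) (simp_all add: index_E_blocks)
    also have "\<dots> = 0"
      unfolding E_ones using \<open>sum_list (take I ?rs) + 0 < sum_list ?rs\<close> by (rule index_zero_vec(1))
    finally show ?thesis .
  qed
  show "int a - int b = int d - int c"
    using row[of 0] row[of 1] assms(2) by (cases "k = 0") (simp_all add: E_sign_def)
  show "int a - int b = int f - int e"
    using row[of 2] row[of 3] assms(3) by (cases "p = 0") (simp_all add: E_sign_def)
qed

lemma neq_add_E_blocks: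
  assumes "k + l > 0" "a + b > 0"
  shows "M \<noteq> M + block_mat [k, l, p, q, r, s] [a, b, c, d, e, f] (E_blocks k l p q r s a b c d e f)"
proof
  let ?rs = "[k, l, p, q, r, s]" and ?cs = "[a, b, c, d, e, f]"
  let ?E = "block_mat ?rs ?cs (E_blocks k l p q r s a b c d e f)"
  define I :: nat where "I = (if 0 < k then 0 else 1)"
  define K :: nat where "K = (if 0 < a then 0 else 1)"
  have I: "I < length ?rs" "0 < ?rs ! I" and K: "K < length ?cs" "0 < ?cs ! K"
    using assms by (auto simp: I_def K_def)
  let ?i = "sum_list (take I ?rs) + 0" and ?j = "sum_list (take K ?cs) + 0"
  have bounds: "?i < sum_list ?rs" "?j < sum_list ?cs"
    using sum_list_take_add_nth_le[OF I(1)] sum_list_take_add_nth_le[OF K(1)] I(2) K(2) by linarith+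
  have entry: "?E $$ (?i, ?j) = E_sign I K"
    using I K by (subst index_block_mat) (auto simp: I_def K_def index_E_blocks)
  have "E_sign I K \<noteq> 0"
    by (simp add: I_def K_def E_sign_def)
  assume same: "M = M + ?E"
  have "M $$ (?i, ?j) = (M + ?E) $$ (?i, ?j)"
    by (simp only: flip: same)
  with bounds entry \<open>E_sign I K \<noteq> 0\<close> show False
    by simp
qed

lemma zero_one_mat_add_E_blocks:
  fixes k l p q r s a b c d e f :: nat
    and X11 X12 X21 X22 Y11 Y12 Y21 Y22 Z11 Z12 Z21 Z22 :: "int mat"
  defines "rs \<equiv> [k, l, p, q, r, s]" and "cs \<equiv> [a, b, c, d, e, f]"
  defines "A \<equiv> block_mat rs cs
      (A_blocks k l p q r s a b c d e f X11 X12 X21 X22 Y11 Y12 Y21 Y22 Z11 Z12 Z21 Z22)"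
    and "E \<equiv> block_mat rs cs (E_blocks k l p q r s a b c d e f)"
  assumes "zero_one_mat A"
  shows "zero_one_mat (A + E)"
proof (rule zero_one_mat_add[OF assms(5)])
  fix i j
  assume "i < dim_row A" "j < dim_col A"
  then have "i < sum_list rs" "j < sum_list cs"
    by (simp_all add: A_def)
  then obtain I i' K j' where "I < length rs" "i' < rs ! I" "i = sum_list (take I rs) + i'"
    and "K < length cs" "j' < cs ! K" "j = sum_list (take K cs) + j'"
    by (metis block_index_cases)
  moreover have "I < 6" "K < 6"
    using \<open>I < length rs\<close> \<open>K < length cs\<close> unfolding rs_def cs_def by simp_all
  ultimately show "E $$ (i, j) = 0 \<or> E $$ (i, j) = 1 \<and> A $$ (i, j) = 0 \<or> E $$ (i, j) = - 1 \<and> A $$ (i, j) = 1"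
    using A_blocks_E_sign_cases[of I K i' k l p q r s j' a b c d e f]
    by (simp add: A_def E_def index_block_mat index_E_blocks rs_def cs_def)
qed (simp add: A_def E_def block_mat_carrier_mat)

section \<open>The Gram conditions\<close>

definition gram_row_condition :: "nat \<Rightarrow> nat \<Rightarrow> nat \<Rightarrow> nat \<Rightarrow> nat \<Rightarrow> nat \<Rightarrow>
    nat \<Rightarrow> nat \<Rightarrow> nat \<Rightarrow> nat \<Rightarrow> nat \<Rightarrow> nat \<Rightarrow> int mat \<Rightarrow> int mat \<Rightarrow> int mat \<Rightarrow> bool" where
  "gram_row_condition k l p q r s a b c d e f X Y Z \<longleftrightarrow>
    (\<exists>x1 x2 y1 y2 z1 z2 :: int.
        X *\<^sub>v pm_vec e f = two_vec k l x1 x2 \<and>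
        Y *\<^sub>v pm_vec c d = two_vec p q y1 y2 \<and>
        Z *\<^sub>v pm_vec a b = two_vec r s z1 z2 \<and>
        x1 = y2 \<and> y2 = - z2 \<and> x2 = y1 \<and> y1 = - z1 \<and>
        x1 + x2 = y1 + y2 \<and> y1 + y2 = - (z1 + z2) \<and> - (z1 + z2) = int e - int f)"

lemma gram_row_condition_iff:
  "gram_row_condition k l p q r s a b c d e f X Y Z \<longleftrightarrow>
    (\<exists>t. X *\<^sub>v pm_vec e f = two_vec k l t (int e - int f - t) \<and>
         Y *\<^sub>v pm_vec c d = two_vec p q (int e - int f - t) t \<and>
         Z *\<^sub>v pm_vec a b = two_vec r s (t - (int e - int f)) (- t))"
proof -
  have "(x1 = y2 \<and> y2 = - z2 \<and> x2 = y1 \<and> y1 = - z1 \<and>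
      x1 + x2 = y1 + y2 \<and> y1 + y2 = - (z1 + z2) \<and> - (z1 + z2) = int e - int f) \<longleftrightarrow>
    (x2 = int e - int f - x1 \<and> y1 = int e - int f - x1 \<and> y2 = x1 \<and> z1 = x1 - (int e - int f) \<and> z2 = - x1)"
    for x1 x2 y1 y2 z1 z2 :: int
    by arith
  then show ?thesis
    unfolding gram_row_condition_def by simp
qed

definition gram_col_condition :: "nat \<Rightarrow> nat \<Rightarrow> nat \<Rightarrow> nat \<Rightarrow> nat \<Rightarrow> nat \<Rightarrow>
    nat \<Rightarrow> nat \<Rightarrow> nat \<Rightarrow> nat \<Rightarrow> nat \<Rightarrow> nat \<Rightarrow> int mat \<Rightarrow> int mat \<Rightarrow> int mat \<Rightarrow> bool" where
  "gram_col_condition k l p q r s a b c d e f X Y Z \<longleftrightarrow>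
    (\<exists>\<alpha>1 \<alpha>2 \<beta>1 \<beta>2 \<gamma>1 \<gamma>2 :: int.
        X\<^sup>T *\<^sub>v pm_vec k l = two_vec e f \<alpha>1 \<alpha>2 \<and>
        Y\<^sup>T *\<^sub>v pm_vec p q = two_vec c d \<beta>1 \<beta>2 \<and>
        Z\<^sup>T *\<^sub>v pm_vec r s = two_vec a b \<gamma>1 \<gamma>2 \<and>
        \<gamma>1 = \<beta>2 \<and> \<beta>2 = - \<alpha>2 \<and> \<gamma>2 = \<beta>1 \<and> \<beta>1 = - \<alpha>1 \<and>
        \<gamma>1 + \<gamma>2 = \<beta>1 + \<beta>2 \<and> \<beta>1 + \<beta>2 = - (\<alpha>1 + \<alpha>2) \<and> - (\<alpha>1 + \<alpha>2) = int l - int k)"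

lemma gram_col_condition_iff_row_condition_transpose:
  assumes "int k - int l = int s - int r"
  shows "gram_col_condition k l p q r s a b c d e f X Y Z \<longleftrightarrow>
    gram_row_condition a b c d e f k l p q r s (Z\<^sup>T) (Y\<^sup>T) (X\<^sup>T)"
proof -
  have "int l - int k = int r - int s"
    using assms by linarith
  then show ?thesis
    unfolding gram_col_condition_def gram_row_condition_def by (simp only:) blast
qed

locale gram_mate_pattern =
  fixes k l p q r s a b c d e f :: nat
    and X11 X12 X21 X22 Y11 Y12 Y21 Y22 Z11 Z12 Z21 Z22 :: "int mat"
  assumes dims:
      "X11 \<in> carrier_mat k e" "X12 \<in> carrier_mat k f"
      "X21 \<in> carrier_mat l e" "X22 \<in> carrier_mat l f"
      "Y11 \<in> carrier_mat p c" "Y12 \<in> carrier_mat p d"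
      "Y21 \<in> carrier_mat q c" "Y22 \<in> carrier_mat q d"
      "Z11 \<in> carrier_mat r a" "Z12 \<in> carrier_mat r b"
      "Z21 \<in> carrier_mat s a" "Z22 \<in> carrier_mat s b"
    and balanced: "int a - int b = int d - int c" "int a - int b = int f - int e"
    and nonempty: "k + l > 0" "p + q > 0"
begin

abbreviation "rs \<equiv> [k, l, p, q, r, s]"
abbreviation "cs \<equiv> [a, b, c, d, e, f]"
abbreviation "As \<equiv> A_blocks k l p q r s a b c d e f X11 X12 X21 X22 Y11 Y12 Y21 Y22 Z11 Z12 Z21 Z22"
abbreviation "A_mat \<equiv> block_mat rs cs As"
abbreviation "E_mat \<equiv> block_mat rs cs (E_blocks k l p q r s a b c d e f)"

text \<open>
  Normalised so that, for rows in different pairs of row blocks, the entry of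
  \<open>(A + E)(A + E)\<^sup>T - A A\<^sup>T\<close> is up to sign the difference of the two row invariants.
\<close>

definition row_invariant :: "nat \<Rightarrow> nat \<Rightarrow> int" where
  "row_invariant I i =
    [row_sum X11 i - row_sum X12 i, int e - int f - (row_sum X21 i - row_sum X22 i),
     int e - int f - (row_sum Y11 i - row_sum Y12 i), row_sum Y21 i - row_sum Y22 i,
     row_sum Z11 i - row_sum Z12 i + (int e - int f), - (row_sum Z21 i - row_sum Z22 i)] ! I"

definition row_sum_table :: "nat \<Rightarrow> nat \<Rightarrow> nat \<Rightarrow> int" where
  "row_sum_table I i K =
    [[0, int b, 0, int d, row_sum X11 i, row_sum X12 i],
     [int a, 0, int c, 0, row_sum X21 i, row_sum X22 i],
     [0, int b, row_sum Y11 i, row_sum Y12 i, 0, int f],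
     [int a, 0, row_sum Y21 i, row_sum Y22 i, int e, 0],
     [row_sum Z11 i, row_sum Z12 i, 0, int d, int e, 0],
     [row_sum Z21 i, row_sum Z22 i, int c, 0, 0, int f]] ! I ! K"

lemma block_row_sum_A_blocks:
  assumes "I < 6" "K < 6" "i < rs ! I"
  shows "block_row_sum cs As I i K = row_sum_table I i K"
  using less_6_cases[OF assms(1)] less_6_cases[OF assms(2)] assms(3) dims[THEN carrier_matD(2)]
  by (elim disjE; simp add: block_row_sum_def A_blocks_def row_sum_table_def row_sum_def)

lemma gram_difference_eq_0_iff:
  assumes "I < 6" "L < 6" "i < rs ! I" "j < rs ! L"
  shows "(\<Sum>K < 6. E_sign L K * block_row_sum cs As I i K + E_sign I K * block_row_sum cs As L j K
      + E_sign I K * E_sign L K * int (cs ! K)) = 0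
    \<longleftrightarrow> I div 2 = L div 2 \<or> row_invariant I i = row_invariant L j"
  using less_6_cases[OF assms(1)] less_6_cases[OF assms(2)] assms balanced
  by (elim disjE; simp add: block_row_sum_A_blocks sum_lessThan_6 row_invariant_def row_sum_table_def E_sign_def;
      linarith)

lemma index_gram_add_eq_iff:
  assumes "I < 6" "L < 6" "i < rs ! I" "j < rs ! L"
  defines "i' \<equiv> sum_list (take I rs) + i" and "j' \<equiv> sum_list (take L rs) + j"
  shows "((A_mat + E_mat) * (A_mat + E_mat)\<^sup>T) $$ (i', j') = (A_mat * A_mat\<^sup>T) $$ (i', j') \<longleftrightarrow>
    I div 2 = L div 2 \<or> row_invariant I i = row_invariant L j"
proof -
  have "((A_mat + E_mat) * (A_mat + E_mat)\<^sup>T) $$ (i', j') = (A_mat * A_mat\<^sup>T) $$ (i', j') +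
    (\<Sum>K < length cs. E_sign L K * block_row_sum cs As I i K + E_sign I K * block_row_sum cs As L j K
      + E_sign I K * E_sign L K * int (cs ! K))"
    unfolding i'_def j'_def using assms(1-4) by (intro gram_add_blockwise_constant) (simp_all add: index_E_blocks)
  also have "length cs = 6"
    by simp
  finally show ?thesis
    using gram_difference_eq_0_iff[OF assms(1-4)] by simp
qed

lemma gram_add_eq_iff_cross_pair_invariants:
  "(A_mat + E_mat) * (A_mat + E_mat)\<^sup>T = A_mat * A_mat\<^sup>T \<longleftrightarrow>
    (\<forall>I < 6. \<forall>L < 6. \<forall>i < rs ! I. \<forall>j < rs ! L.
      I div 2 \<noteq> L div 2 \<longrightarrow> row_invariant I i = row_invariant L j)"
proof
  assume "(A_mat + E_mat) * (A_mat + E_mat)\<^sup>T = A_mat * A_mat\<^sup>T"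
  then show "\<forall>I < 6. \<forall>L < 6. \<forall>i < rs ! I. \<forall>j < rs ! L.
      I div 2 \<noteq> L div 2 \<longrightarrow> row_invariant I i = row_invariant L j"
    using index_gram_add_eq_iff by (simp, blast)
next
  assume cross: "\<forall>I < 6. \<forall>L < 6. \<forall>i < rs ! I. \<forall>j < rs ! L.
      I div 2 \<noteq> L div 2 \<longrightarrow> row_invariant I i = row_invariant L j"
  show "(A_mat + E_mat) * (A_mat + E_mat)\<^sup>T = A_mat * A_mat\<^sup>T"
  proof (rule eq_matI)
    fix i j assume "i < dim_row (A_mat * A_mat\<^sup>T)" "j < dim_col (A_mat * A_mat\<^sup>T)"
    then have "i < sum_list rs" "j < sum_list rs"
      by simp_all
    then obtain I i' L j' where "I < length rs" "i' < rs ! I" "i = sum_list (take I rs) + i'"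
      and "L < length rs" "j' < rs ! L" "j = sum_list (take L rs) + j'"
      by (metis block_index_cases)
    moreover have "I < 6" "L < 6"
      using \<open>I < length rs\<close> \<open>L < length rs\<close> by (simp_all add: eval_nat_numeral)
    moreover from calculation have "I div 2 = L div 2 \<or> row_invariant I i' = row_invariant L j'"
      using cross by blast
    ultimately show "((A_mat + E_mat) * (A_mat + E_mat)\<^sup>T) $$ (i, j) = (A_mat * A_mat\<^sup>T) $$ (i, j)"
      using index_gram_add_eq_iff[of I L i' j'] by simp
  qed simp_all
qed

lemma cross_pair_invariants_iff_constant:
  "(\<forall>I < 6. \<forall>L < 6. \<forall>i < rs ! I. \<forall>j < rs ! L.
      I div 2 \<noteq> L div 2 \<longrightarrow> row_invariant I i = row_invariant L j) \<longleftrightarrow>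
    (\<exists>t. \<forall>I < 6. \<forall>i < rs ! I. row_invariant I i = t)"
proof
  assume cross: "\<forall>I < 6. \<forall>L < 6. \<forall>i < rs ! I. \<forall>j < rs ! L.
      I div 2 \<noteq> L div 2 \<longrightarrow> row_invariant I i = row_invariant L j"
  define I0 :: nat where "I0 = (if 0 < k then 0 else 1)"
  define I1 :: nat where "I1 = (if 0 < p then 2 else 3)"
  have I0: "I0 < 6" "0 < rs ! I0" "I0 div 2 = 0" and I1: "I1 < 6" "0 < rs ! I1" "I1 div 2 = 1"
    using nonempty by (auto simp: I0_def I1_def)
  have "row_invariant I i = row_invariant I0 0" if "I < 6" "i < rs ! I" for I i
  proof (cases "I div 2 = 0")
    case True
    have "row_invariant I i = row_invariant I1 0"
      using that I1 True by (intro cross[rule_format]) simp_all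
    moreover have "row_invariant I0 0 = row_invariant I1 0"
      using I0 I1 by (intro cross[rule_format]) simp_all
    ultimately show ?thesis by simp
  next
    case False
    then show ?thesis
      using that I0 by (intro cross[rule_format]) simp_all
  qed
  then show "\<exists>t. \<forall>I < 6. \<forall>i < rs ! I. row_invariant I i = t"
    by blast
qed auto

lemma row_invariant_constant_iff:
  "(\<forall>I < 6. \<forall>i < rs ! I. row_invariant I i = t) \<longleftrightarrow>
    four_block_mat X11 X12 X21 X22 *\<^sub>v pm_vec e f = two_vec k l t (int e - int f - t) \<and>
    four_block_mat Y11 Y12 Y21 Y22 *\<^sub>v pm_vec c d = two_vec p q (int e - int f - t) t \<and>
    four_block_mat Z11 Z12 Z21 Z22 *\<^sub>v pm_vec a b = two_vec r s (t - (int e - int f)) (- t)"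
proof -
  have "four_block_mat X11 X12 X21 X22 *\<^sub>v pm_vec e f = two_vec k l t (int e - int f - t) \<longleftrightarrow>
      (\<forall>i < k. row_invariant 0 i = t) \<and> (\<forall>i < l. row_invariant 1 i = t)"
    by (auto simp: four_block_mat_mult_pm_vec_eq_two_vec_iff dims row_invariant_def)
  moreover have "four_block_mat Y11 Y12 Y21 Y22 *\<^sub>v pm_vec c d = two_vec p q (int e - int f - t) t \<longleftrightarrow>
      (\<forall>i < p. row_invariant 2 i = t) \<and> (\<forall>i < q. row_invariant 3 i = t)"
    by (auto simp: four_block_mat_mult_pm_vec_eq_two_vec_iff dims row_invariant_def)
  moreover have "four_block_mat Z11 Z12 Z21 Z22 *\<^sub>v pm_vec a b = two_vec r s (t - (int e - int f)) (- t) \<longleftrightarrow>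
      (\<forall>i < r. row_invariant 4 i = t) \<and> (\<forall>i < s. row_invariant 5 i = t)"
    by (auto simp: four_block_mat_mult_pm_vec_eq_two_vec_iff dims row_invariant_def)
  ultimately show ?thesis
    by (simp add: all_less_6_iff)
qed

lemma gram_add_eq_iff_row_condition:
  "(A_mat + E_mat) * (A_mat + E_mat)\<^sup>T = A_mat * A_mat\<^sup>T \<longleftrightarrow>
    gram_row_condition k l p q r s a b c d e f
      (four_block_mat X11 X12 X21 X22) (four_block_mat Y11 Y12 Y21 Y22) (four_block_mat Z11 Z12 Z21 Z22)"
  unfolding gram_add_eq_iff_cross_pair_invariants cross_pair_invariants_iff_constant row_invariant_constant_iff
    gram_row_condition_iff ..

end

lemma gram_transpose_add_eq_iff_col_condition:
  fixes k l p q r s a b c d e f :: nat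
    and X11 X12 X21 X22 Y11 Y12 Y21 Y22 Z11 Z12 Z21 Z22 :: "int mat"
  defines "rs \<equiv> [k, l, p, q, r, s]" and "cs \<equiv> [a, b, c, d, e, f]"
  defines "A \<equiv> block_mat rs cs
      (A_blocks k l p q r s a b c d e f X11 X12 X21 X22 Y11 Y12 Y21 Y22 Z11 Z12 Z21 Z22)"
    and "E \<equiv> block_mat rs cs (E_blocks k l p q r s a b c d e f)"
  assumes dims:
      "X11 \<in> carrier_mat k e" "X12 \<in> carrier_mat k f"
      "X21 \<in> carrier_mat l e" "X22 \<in> carrier_mat l f"
      "Y11 \<in> carrier_mat p c" "Y12 \<in> carrier_mat p d"
      "Y21 \<in> carrier_mat q c" "Y22 \<in> carrier_mat q d"
      "Z11 \<in> carrier_mat r a" "Z12 \<in> carrier_mat r b"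
      "Z21 \<in> carrier_mat s a" "Z22 \<in> carrier_mat s b"
    and balanced: "int k - int l = int q - int p" "int k - int l = int s - int r"
    and nonempty: "a + b > 0" "c + d > 0"
  shows "(A + E)\<^sup>T * (A + E) = A\<^sup>T * A \<longleftrightarrow>
    gram_col_condition k l p q r s a b c d e f
      (four_block_mat X11 X12 X21 X22) (four_block_mat Y11 Y12 Y21 Y22) (four_block_mat Z11 Z12 Z21 Z22)"
proof -
  interpret cols: gram_mate_pattern a b c d e f k l p q r s
      "Z11\<^sup>T" "Z21\<^sup>T" "Z12\<^sup>T" "Z22\<^sup>T" "Y11\<^sup>T" "Y21\<^sup>T" "Y12\<^sup>T" "Y22\<^sup>T" "X11\<^sup>T" "X21\<^sup>T" "X12\<^sup>T" "X22\<^sup>T"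
    using dims balanced nonempty by unfold_locales auto
  have AT: "A\<^sup>T = cols.A_mat" and ET: "E\<^sup>T = cols.E_mat"
    unfolding A_def E_def rs_def cs_def by (rule transpose_A_blocks[OF dims], rule transpose_E_blocks)
  have sum_T: "(A + E)\<^sup>T = cols.A_mat + cols.E_mat"
    unfolding AT[symmetric] ET[symmetric] A_def E_def by (rule transpose_add) (rule block_mat_carrier_mat)+
  have "(A + E)\<^sup>T * (A + E) = (cols.A_mat + cols.E_mat) * (cols.A_mat + cols.E_mat)\<^sup>T"
    by (simp only: transpose_transpose flip: sum_T)
  moreover have "A\<^sup>T * A = cols.A_mat * cols.A_mat\<^sup>T"
    unfolding AT[symmetric] transpose_transpose ..
  ultimately have "(A + E)\<^sup>T * (A + E) = A\<^sup>T * A \<longleftrightarrow>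
      (cols.A_mat + cols.E_mat) * (cols.A_mat + cols.E_mat)\<^sup>T = cols.A_mat * cols.A_mat\<^sup>T"
    by (simp only:)
  also have "\<dots> \<longleftrightarrow> gram_row_condition a b c d e f k l p q r s
      (four_block_mat (Z11\<^sup>T) (Z21\<^sup>T) (Z12\<^sup>T) (Z22\<^sup>T)) (four_block_mat (Y11\<^sup>T) (Y21\<^sup>T) (Y12\<^sup>T) (Y22\<^sup>T))
      (four_block_mat (X11\<^sup>T) (X21\<^sup>T) (X12\<^sup>T) (X22\<^sup>T))"
    by (rule cols.gram_add_eq_iff_row_condition)
  also have "\<dots> \<longleftrightarrow> gram_col_condition k l p q r s a b c d e f
      (four_block_mat X11 X12 X21 X22) (four_block_mat Y11 Y12 Y21 Y22) (four_block_mat Z11 Z12 Z21 Z22)"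
    unfolding gram_col_condition_iff_row_condition_transpose[OF balanced(2)] transpose_four_block_mat[OF dims(1-4)]
      transpose_four_block_mat[OF dims(5-8)] transpose_four_block_mat[OF dims(9-12)] ..
  finally show ?thesis .
qed

theorem theorem4p22:
  fixes k l p q r s a b c d e f :: nat
    and X11 X12 X21 X22 Y11 Y12 Y21 Y22 Z11 Z12 Z21 Z22 :: "int mat"
    and E A X Y Z :: "int mat"
  defines "E \<equiv> block_mat [k, l, p, q, r, s] [a, b, c, d, e, f]
      [[ J k a, - J k b, J k c, - J k d, 0\<^sub>m k e, 0\<^sub>m k f],
       [- J l a, J l b, - J l c, J l d, 0\<^sub>m l e, 0\<^sub>m l f],
       [ J p a, - J p b, 0\<^sub>m p c, 0\<^sub>m p d, J p e, - J p f],
       [- J q a, J q b, 0\<^sub>m q c, 0\<^sub>m q d, - J q e, J q f],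
       [0\<^sub>m r a, 0\<^sub>m r b, J r c, - J r d, - J r e, J r f],
       [0\<^sub>m s a, 0\<^sub>m s b, - J s c, J s d, J s e, - J s f]]"
  defines "A \<equiv> block_mat [k, l, p, q, r, s] [a, b, c, d, e, f]
      [[0\<^sub>m k a, J k b, 0\<^sub>m k c, J k d, X11, X12],
       [J l a, 0\<^sub>m l b, J l c, 0\<^sub>m l d, X21, X22],
       [0\<^sub>m p a, J p b, Y11, Y12, 0\<^sub>m p e, J p f],
       [J q a, 0\<^sub>m q b, Y21, Y22, J q e, 0\<^sub>m q f],
       [Z11, Z12, 0\<^sub>m r c, J r d, J r e, 0\<^sub>m r f],
       [Z21, Z22, J s c, 0\<^sub>m s d, 0\<^sub>m s e, J s f]]"
  defines "X \<equiv> four_block_mat X11 X12 X21 X22"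
      and "Y \<equiv> four_block_mat Y11 Y12 Y21 Y22"
      and "Z \<equiv> four_block_mat Z11 Z12 Z21 Z22"
  assumes dims:
      "X11 \<in> carrier_mat k e" "X12 \<in> carrier_mat k f"
      "X21 \<in> carrier_mat l e" "X22 \<in> carrier_mat l f"
      "Y11 \<in> carrier_mat p c" "Y12 \<in> carrier_mat p d"
      "Y21 \<in> carrier_mat q c" "Y22 \<in> carrier_mat q d"
      "Z11 \<in> carrier_mat r a" "Z12 \<in> carrier_mat r b"
      "Z21 \<in> carrier_mat s a" "Z22 \<in> carrier_mat s b"
    and E_row: "E *\<^sub>v ones (a + b + c + d + e + f) = 0\<^sub>v (k + l + p + q + r + s)"
    and E_col: "E\<^sup>T *\<^sub>v ones (k + l + p + q + r + s) = 0\<^sub>v (a + b + c + d + e + f)"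
    and pos: "a + b > 0" "c + d > 0" "e + f > 0" "k + l > 0" "p + q > 0" "r + s > 0"
    and A01: "zero_one_mat A"
  shows "(gram_mates A (A + E) \<longleftrightarrow>
          (\<exists>x1 x2 y1 y2 z1 z2 :: int.
              X *\<^sub>v pm_vec e f = two_vec k l x1 x2 \<and>
              Y *\<^sub>v pm_vec c d = two_vec p q y1 y2 \<and>
              Z *\<^sub>v pm_vec a b = two_vec r s z1 z2 \<and>
              x1 = y2 \<and> y2 = - z2 \<and> x2 = y1 \<and> y1 = - z1 \<and>
              x1 + x2 = y1 + y2 \<and> y1 + y2 = - (z1 + z2) \<and> - (z1 + z2) = int e - int f) \<and>
          (\<exists>\<alpha>1 \<alpha>2 \<beta>1 \<beta>2 \<gamma>1 \<gamma>2 :: int.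
              X\<^sup>T *\<^sub>v pm_vec k l = two_vec e f \<alpha>1 \<alpha>2 \<and>
              Y\<^sup>T *\<^sub>v pm_vec p q = two_vec c d \<beta>1 \<beta>2 \<and>
              Z\<^sup>T *\<^sub>v pm_vec r s = two_vec a b \<gamma>1 \<gamma>2 \<and>
              \<gamma>1 = \<beta>2 \<and> \<beta>2 = - \<alpha>2 \<and> \<gamma>2 = \<beta>1 \<and> \<beta>1 = - \<alpha>1 \<and>
              \<gamma>1 + \<gamma>2 = \<beta>1 + \<beta>2 \<and> \<beta>1 + \<beta>2 = - (\<alpha>1 + \<alpha>2) \<and> - (\<alpha>1 + \<alpha>2) = int l - int k))
       \<and>
       (\<forall>x1 x2 y1 y2 z1 z2 \<alpha>1 \<alpha>2 \<beta>1 \<beta>2 \<gamma>1 \<gamma>2 :: int.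
          (X *\<^sub>v pm_vec e f = two_vec k l x1 x2 \<and>
           Y *\<^sub>v pm_vec c d = two_vec p q y1 y2 \<and>
           Z *\<^sub>v pm_vec a b = two_vec r s z1 z2 \<and>
           x1 = y2 \<and> y2 = - z2 \<and> x2 = y1 \<and> y1 = - z1 \<and>
           x1 + x2 = y1 + y2 \<and> y1 + y2 = - (z1 + z2) \<and> - (z1 + z2) = int e - int f) \<and>
          (X\<^sup>T *\<^sub>v pm_vec k l = two_vec e f \<alpha>1 \<alpha>2 \<and>
           Y\<^sup>T *\<^sub>v pm_vec p q = two_vec c d \<beta>1 \<beta>2 \<and>
           Z\<^sup>T *\<^sub>v pm_vec r s = two_vec a b \<gamma>1 \<gamma>2 \<and>
           \<gamma>1 = \<beta>2 \<and> \<beta>2 = - \<alpha>2 \<and> \<gamma>2 = \<beta>1 \<and> \<beta>1 = - \<alpha>1 \<and>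
           \<gamma>1 + \<gamma>2 = \<beta>1 + \<beta>2 \<and> \<beta>1 + \<beta>2 = - (\<alpha>1 + \<alpha>2) \<and> - (\<alpha>1 + \<alpha>2) = int l - int k)
          \<longrightarrow> int e * \<alpha>1 - int f * \<alpha>2 = int k * x1 - int l * x2 \<and>
              int c * \<beta>1 - int d * \<beta>2 = int p * y1 - int q * y2 \<and>
              int a * \<gamma>1 - int b * \<gamma>2 = int r * z1 - int s * z2)"
proof -
  let ?rs = "[k, l, p, q, r, s]" and ?cs = "[a, b, c, d, e, f]"
  have A: "A = block_mat ?rs ?cs
      (A_blocks k l p q r s a b c d e f X11 X12 X21 X22 Y11 Y12 Y21 Y22 Z11 Z12 Z21 Z22)"
    unfolding A_def A_blocks_def ..
  have E: "E = block_mat ?rs ?cs (E_blocks k l p q r s a b c d e f)"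
    unfolding E_def E_blocks_def ..
  note balanced = E_mult_ones_eq_0D[OF E_row[unfolded E] pos(4,5)]
  note balanced_T = E_mult_ones_eq_0D[OF E_col[unfolded E transpose_E_blocks] pos(1,2)]
  interpret rows: gram_mate_pattern k l p q r s a b c d e f X11 X12 X21 X22 Y11 Y12 Y21 Y22 Z11 Z12 Z21 Z22
    using dims balanced pos(4,5) by unfold_locales
  have "zero_one_mat (A + E)"
    using A01 unfolding A E by (rule zero_one_mat_add_E_blocks)
  moreover have "A \<noteq> A + E"
    using pos(4,1) unfolding E by (rule neq_add_E_blocks)
  ultimately have "gram_mates A (A + E) \<longleftrightarrow>
      (A + E) * (A + E)\<^sup>T = A * A\<^sup>T \<and> (A + E)\<^sup>T * (A + E) = A\<^sup>T * A"
    unfolding gram_mates_def using A01 by auto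
  also have "\<dots> \<longleftrightarrow> gram_row_condition k l p q r s a b c d e f X Y Z \<and>
      gram_col_condition k l p q r s a b c d e f X Y Z"
    unfolding A E X_def Y_def Z_def
    using rows.gram_add_eq_iff_row_condition gram_transpose_add_eq_iff_col_condition[OF dims balanced_T pos(1,2)]
    by (simp only:)
  finally have conditions: "gram_mates A (A + E) \<longleftrightarrow>
      gram_row_condition k l p q r s a b c d e f X Y Z \<and> gram_col_condition k l p q r s a b c d e f X Y Z" .
  have "X \<in> carrier_mat (k + l) (e + f)" "Y \<in> carrier_mat (p + q) (c + d)" "Z \<in> carrier_mat (r + s) (a + b)"
    using dims by (simp_all add: X_def Y_def Z_def)
  note identities = this[THEN pm_vec_two_vec_transpose_identity]
  show ?thesis
    by (rule conjI[OF conditions[unfolded gram_row_condition_def gram_col_condition_def]]) (use identities in blast)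
qed

end
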